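(* Let $\epsilon_1>0$, $n\ge1$, let $u$ be a utility function on contexts of sensitivity $\Delta u\le1$ (context population size or overlap with a fixed starting context, $-\infty$ on non-matching contexts), and let $C_V$ be a starting context with $f_M(D_{C_V},V)=\mathrm{true}$. Consider the Breadth-First Search Sampling algorithm: initialize $C_M=\{C_V\}$ and $\mathrm{Visited}=\emptyset$; while $|\mathrm{Visited}|\le n$ and $C_M\ne\emptyset$: let $C=\mathrm{Exp}^{\epsilon_1}_u(D,C_M)$, add $C$ to $\mathrm{Visited}$ and remove it from $C_M$, and add to $C_M$ every context connected to $C$ that is matching for $V$ and not in $\mathrm{Visited}$. Finally output $\mathrm{Exp}^{\epsilon_1}_u(D,\mathrm{Visited})$. Then this algorithm satisfies $((2n+2)\epsilon_1,\ COE_M(\cdot,V))$-Output Constrained Differential Privacy.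
   Context: Dataset $D$ over categorical attributes $A_1,\dots,A_m$ (domain sizes $|A_i|$, all possible values) and metric attribute $M$; $t=\sum_i|A_i|$. A context is a binary vector of length $t$, $c_{ij}=1$ meaning the $j$-th value of $A_i$ is selected; $D_C$ is the set of tuples of $D$ whose value in every $A_i$ is selected by $C$. Two contexts are connected if their Hamming distance is $1$. $f_M(D_C,V)$ is a deterministic test of whether record $V$ is an outlier in $D_C$ w.r.t. $M$; a context is matching if this is true. $COE_M(D,V)$ is the set of contexts $C$ with $V\in D_C$ and $f_M(D_C,V)=\mathrm{true}$. Sensitivity $\Delta u=\max|u(D_1,r)-u(D_2,r)|$ over neighboring datasets (differing by adding/removing one record) and outputs $r$. $\mathrm{Exp}^{\epsilon}_u(D,\mathcal R)$ outputs $r\in\mathcal R$ with probability $\exp(\epsilon u(D,r)/(2\Delta u))/\sum_{r'\in\mathcal R}\exp(\epsilon u(D,r')/(2\Delta u))$. $D_1,D_2$ are $f$-neighbors if they differ by adding/removing one record and $f(D_1)=f(D_2)\ne\emptyset$; $\mathcal M$ satisfies $(\epsilon,f)$-Output Constrained Differential Privacy if $\Pr[\mathcal M(D_1)\in S]\le e^\epsilon\Pr[\mathcal M(D_2)\in S]$ for all $f$-neighbors and all output sets $S$. *)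

theory Defs
  imports "HOL-Probability.Probability"
begin

text \<open>Categorical attributes A_0..A_(m-1); attribute A_i has values 0..<dsz i.
  A context (binary vector of length t) is represented by the set of selected
  pairs (i,j), i.e. c_ij = 1 iff (i,j) is in the set.\<close>

type_synonym ctx = "(nat \<times> nat) set"

definition ctxs :: "nat \<Rightarrow> (nat \<Rightarrow> nat) \<Rightarrow> ctx set" where
  "ctxs m dsz = Pow (SIGMA i:{..<m}. {..<dsz i})"

definition connected :: "ctx \<Rightarrow> ctx \<Rightarrow> bool" where
  "connected C C' \<longleftrightarrow> card ((C - C') \<union> (C' - C)) = 1"

text \<open>D_C: tuples whose value in every A_i is selected by C
  (attr r i is the index of the value of record r in attribute A_i).\<close>
definition restrict_ctx :: "nat \<Rightarrow> ('r \<Rightarrow> nat \<Rightarrow> nat) \<Rightarrow> 'r multiset \<Rightarrow> ctx \<Rightarrow> 'r multiset" where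
  "restrict_ctx m attr D C = filter_mset (\<lambda>r. \<forall>i<m. (i, attr r i) \<in> C) D"

definition COE :: "nat \<Rightarrow> (nat \<Rightarrow> nat) \<Rightarrow> ('r \<Rightarrow> nat \<Rightarrow> nat) \<Rightarrow> ('r multiset \<Rightarrow> 'r \<Rightarrow> bool)
    \<Rightarrow> 'r multiset \<Rightarrow> 'r \<Rightarrow> ctx set" where
  "COE m dsz attr f D V =
     {C \<in> ctxs m dsz. V \<in># restrict_ctx m attr D C \<and> f (restrict_ctx m attr D C) V}"

definition neighbors :: "'r multiset \<Rightarrow> 'r multiset \<Rightarrow> bool" where
  "neighbors D1 D2 \<longleftrightarrow> (\<exists>r. D2 = D1 + {#r#} \<or> D1 = D2 + {#r#})"

definition exp_mech :: "real \<Rightarrow> real \<Rightarrow> ('c \<Rightarrow> real) \<Rightarrow> 'c set \<Rightarrow> 'c pmf" where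
  "exp_mech eps du q R = embed_pmf (\<lambda>r. if r \<in> R then
      exp (eps * q r / (2 * du)) / (\<Sum>r'\<in>R. exp (eps * q r' / (2 * du))) else 0)"

text \<open>The fuel argument k
  only bounds the number of iterations; with k = n+1 it is never the reason for
  stopping, since every iteration adds a new context to Visited.\<close>
fun bfs_loop :: "real \<Rightarrow> real \<Rightarrow> nat \<Rightarrow> (ctx \<Rightarrow> ctx set) \<Rightarrow> (ctx \<Rightarrow> real) \<Rightarrow> ctx set
    \<Rightarrow> nat \<Rightarrow> ctx set \<times> ctx set \<Rightarrow> (ctx set \<times> ctx set) pmf" where
  "bfs_loop eps du n nbrs q Mt 0 st = return_pmf st"
| "bfs_loop eps du n nbrs q Mt (Suc k) (CM, Vis) =
     (if card Vis \<le> n \<and> CM \<noteq> {} then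
        bind_pmf (exp_mech eps du q CM) (\<lambda>C.
          bfs_loop eps du n nbrs q Mt k
            ((CM - {C}) \<union> {C' \<in> nbrs C. C' \<in> Mt \<and> C' \<notin> Vis \<union> {C}}, Vis \<union> {C}))
      else return_pmf (CM, Vis))"

definition bfs_sample :: "nat \<Rightarrow> (nat \<Rightarrow> nat) \<Rightarrow> ('r \<Rightarrow> nat \<Rightarrow> nat) \<Rightarrow> ('r multiset \<Rightarrow> 'r \<Rightarrow> bool)
    \<Rightarrow> ('r multiset \<Rightarrow> ctx \<Rightarrow> real) \<Rightarrow> real \<Rightarrow> real \<Rightarrow> nat \<Rightarrow> ctx \<Rightarrow> 'r \<Rightarrow> 'r multiset \<Rightarrow> ctx pmf" where
  "bfs_sample m dsz attr f u eps du n CV V D =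
     bind_pmf
       (bfs_loop eps du n (\<lambda>C. {C' \<in> ctxs m dsz. connected C C'}) (u D) (COE m dsz attr f D V)
          (Suc n) ({CV}, {}))
       (\<lambda>(CM, Vis). exp_mech eps du (u D) Vis)"

definition OCDP_on :: "real \<Rightarrow> ('d \<Rightarrow> 'o set) \<Rightarrow> ('d \<Rightarrow> 'x pmf) \<Rightarrow> ('d \<Rightarrow> 'd \<Rightarrow> bool) \<Rightarrow> 'd set \<Rightarrow> bool" where
  "OCDP_on eps g M nb DS \<longleftrightarrow>
     (\<forall>D1\<in>DS. \<forall>D2\<in>DS. nb D1 D2 \<and> g D1 = g D2 \<and> g D1 \<noteq> {} \<longrightarrow>
        (\<forall>S. measure_pmf.prob (M D1) S \<le> exp eps * measure_pmf.prob (M D2) S))"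

end

theory Submission
  imports Defs
begin

(* For output-constrained neighbours D1, D2 the sets of matching contexts COE(D1, V) and
   COE(D2, V) coincide, so the search explores the same graph on both inputs and the runs
   differ only in the utilities fed to the exponential mechanism. Each call of the mechanism
   on candidates inside COE multiplies point probabilities by at most exp eps1; the loop makes
   at most n + 1 calls before the final one, and composing pointwise bounds through bind_pmf
   gives the factor exp ((n + 2) eps1), which is below exp ((2n + 2) eps1). *)

lemma pmf_exp_mech:
  assumes "finite R" "R \<noteq> {}"
  shows "pmf (exp_mech eps du q R) r = (if r \<in> R then
      exp (eps * q r / (2 * du)) / (\<Sum>r'\<in>R. exp (eps * q r' / (2 * du))) else 0)"
  unfolding exp_mech_def
proof (rule pmf_embed_pmf)
  let ?Z = "\<Sum>r'\<in>R. exp (eps * q r' / (2 * du))"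
  have "?Z > 0" using assms by (intro sum_pos) auto
  then show "0 \<le> (if x \<in> R then exp (eps * q x / (2 * du)) / ?Z else 0)" for x
    by simp
  have "(\<Sum>x\<in>R. exp (eps * q x / (2 * du)) / ?Z) = 1"
    using \<open>?Z > 0\<close> by (simp add: sum_divide_distrib[symmetric])
  then show "(\<integral>\<^sup>+x. ennreal (if x \<in> R then exp (eps * q x / (2 * du)) / ?Z else 0)
      \<partial>count_space UNIV) = 1"
    using assms \<open>?Z > 0\<close> by (simp add: nn_integral_count_space'[where A = R] sum_ennreal)
qed

lemma set_pmf_exp_mech:
  assumes "finite R" "R \<noteq> {}"
  shows "set_pmf (exp_mech eps du q R) \<subseteq> R"
  by (auto simp: set_pmf_iff pmf_exp_mech[OF assms] split: if_splits)

lemma nn_integral_measure_pmf_le_scaled: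
  assumes "c \<ge> 0" "\<And>x. pmf p x \<le> c * pmf q x"
  shows "(\<integral>\<^sup>+x. g x \<partial>measure_pmf p) \<le> ennreal c * (\<integral>\<^sup>+x. g x \<partial>measure_pmf q)"
proof -
  have "(\<integral>\<^sup>+x. g x \<partial>measure_pmf p) = (\<integral>\<^sup>+x. ennreal (pmf p x) * g x \<partial>count_space UNIV)"
    by (rule nn_integral_measure_pmf)
  also have "\<dots> \<le> (\<integral>\<^sup>+x. ennreal c * (ennreal (pmf q x) * g x) \<partial>count_space UNIV)"
    using assms by (intro nn_integral_mono)
      (simp add: mult.assoc[symmetric] ennreal_mult[symmetric] mult_right_mono)
  also have "\<dots> = ennreal c * (\<integral>\<^sup>+x. g x \<partial>measure_pmf q)"
    by (simp add: nn_integral_cmult nn_integral_measure_pmf)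
  finally show ?thesis .
qed

lemma measure_pmf_prob_le_scaled:
  assumes "c \<ge> 0" "\<And>x. pmf p x \<le> c * pmf q x"
  shows "measure_pmf.prob p S \<le> c * measure_pmf.prob q S"
proof -
  have "ennreal (measure_pmf.prob p S) \<le> ennreal c * ennreal (measure_pmf.prob q S)"
    using nn_integral_measure_pmf_le_scaled[OF assms, of "indicator S"]
    by (simp add: measure_pmf.emeasure_eq_measure)
  then show ?thesis
    using assms(1) by (simp add: ennreal_mult[symmetric] ennreal_le_iff)
qed

lemma pmf_bind_le_scaled:
  assumes "c1 \<ge> 0" "c2 \<ge> 0" "\<And>x. pmf p1 x \<le> c1 * pmf p2 x"
    and "\<And>x y. x \<in> set_pmf p1 \<Longrightarrow> pmf (f1 x) y \<le> c2 * pmf (f2 x) y"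
  shows "pmf (bind_pmf p1 f1) y \<le> c1 * c2 * pmf (bind_pmf p2 f2) y"
proof -
  have "ennreal (pmf (bind_pmf p1 f1) y) = (\<integral>\<^sup>+x. pmf (f1 x) y \<partial>measure_pmf p1)"
    by (rule ennreal_pmf_bind)
  also have "\<dots> \<le> (\<integral>\<^sup>+x. ennreal c2 * pmf (f2 x) y \<partial>measure_pmf p1)"
    using assms by (intro nn_integral_mono_AE)
      (auto simp: AE_measure_pmf_iff ennreal_mult[symmetric])
  also have "\<dots> \<le> ennreal c1 * (\<integral>\<^sup>+x. ennreal c2 * pmf (f2 x) y \<partial>measure_pmf p2)"
    by (rule nn_integral_measure_pmf_le_scaled[OF assms(1,3)])
  also have "\<dots> = ennreal (c1 * c2 * pmf (bind_pmf p2 f2) y)"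
    using assms by (simp add: nn_integral_cmult ennreal_pmf_bind ennreal_mult mult.assoc)
  finally show ?thesis
    using assms by (simp add: ennreal_le_iff)
qed

lemma pmf_exp_mech_le:
  fixes q1 q2 :: "'c \<Rightarrow> real"
  assumes "eps \<ge> 0" "du > 0" "finite R" "\<And>C. C \<in> R \<Longrightarrow> \<bar>q1 C - q2 C\<bar> \<le> du"
  shows "pmf (exp_mech eps du q1 R) r \<le> exp eps * pmf (exp_mech eps du q2 R) r"
proof (cases "R \<noteq> {} \<and> r \<in> R")
  case False
  show ?thesis
  proof (cases "R = {}")
    case True
    have "pmf (exp_mech eps du q1 R) r \<le> 1 * pmf (exp_mech eps du q2 R) r"
      using True by (simp add: exp_mech_def)
    also have "\<dots> \<le> exp eps * pmf (exp_mech eps du q2 R) r"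
      using assms(1) by (intro mult_right_mono) auto
    finally show ?thesis .
  qed (use False assms(3) in \<open>simp add: pmf_exp_mech\<close>)
next
  case True
  define w where "w q C = exp (eps * q C / (2 * du))" for q :: "'c \<Rightarrow> real" and C
  have w_le: "w q C \<le> exp (eps / 2) * w q' C"
    if "C \<in> R" "q = q1 \<and> q' = q2 \<or> q = q2 \<and> q' = q1" for q q' C
  proof -
    have "eps * (q C - q' C) \<le> eps * du"
      using assms(1) assms(4)[OF \<open>C \<in> R\<close>] that(2) by (intro mult_left_mono) auto
    then have "eps * q C / (2 * du) \<le> eps / 2 + eps * q' C / (2 * du)"
      using assms(2) by (simp add: field_simps)
    then show ?thesis
      unfolding w_def by (simp flip: exp_add)
  qed
  have Z_pos: "(\<Sum>C\<in>R. w q C) > 0" for q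
    using True assms(3) by (intro sum_pos) (auto simp: w_def)
  have "(\<Sum>C\<in>R. w q2 C) \<le> exp (eps / 2) * (\<Sum>C\<in>R. w q1 C)"
    unfolding sum_distrib_left by (intro sum_mono w_le) auto
  then have "w q1 r / (\<Sum>C\<in>R. w q1 C)
      \<le> (exp (eps / 2) * w q2 r) / ((\<Sum>C\<in>R. w q2 C) / exp (eps / 2))"
    using True Z_pos w_le[of r q1 q2] by (intro frac_le) (auto simp: field_simps w_def)
  also have "\<dots> = exp eps * (w q2 r / (\<Sum>C\<in>R. w q2 C))"
    by (simp add: field_simps flip: exp_add)
  finally show ?thesis
    using True assms(3) by (simp add: pmf_exp_mech w_def)
qed

lemma set_pmf_bfs_loop:
  assumes "finite Mt"
  shows "CM \<subseteq> Mt \<Longrightarrow> Vis \<subseteq> Mt \<Longrightarrow>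
    set_pmf (bfs_loop eps du n nbrs q Mt k (CM, Vis)) \<subseteq> Pow Mt \<times> Pow Mt"
proof (induction k arbitrary: CM Vis)
  case 0
  then show ?case by simp
next
  case (Suc k)
  show ?case
  proof (cases "card Vis \<le> n \<and> CM \<noteq> {}")
    case True
    have "set_pmf (exp_mech eps du q CM) \<subseteq> Mt"
      using set_pmf_exp_mech[of CM] finite_subset[OF Suc.prems(1) assms] True Suc.prems(1)
      by blast
    moreover have "set_pmf (bfs_loop eps du n nbrs q Mt k
        ((CM - {C}) \<union> {C' \<in> nbrs C. C' \<in> Mt \<and> C' \<notin> Vis \<union> {C}}, Vis \<union> {C}))
        \<subseteq> Pow Mt \<times> Pow Mt" if "C \<in> Mt" for C
      using that Suc.prems by (intro Suc.IH) auto
    ultimately show ?thesis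
      by (simp only: bfs_loop.simps if_P[OF True] set_bind_pmf) blast
  next
    case False
    show ?thesis
      using Suc.prems by (simp only: bfs_loop.simps if_not_P[OF False]) simp
  qed
qed

lemma pmf_bfs_loop_le:
  assumes "eps \<ge> 0" "du > 0" "finite Mt" "\<And>C. C \<in> Mt \<Longrightarrow> \<bar>q1 C - q2 C\<bar> \<le> du"
  shows "CM \<subseteq> Mt \<Longrightarrow> pmf (bfs_loop eps du n nbrs q1 Mt k (CM, Vis)) s
    \<le> exp (eps * k) * pmf (bfs_loop eps du n nbrs q2 Mt k (CM, Vis)) s"
proof (induction k arbitrary: CM Vis s)
  case 0
  then show ?case by simp
next
  case (Suc k)
  show ?case
  proof (cases "card Vis \<le> n \<and> CM \<noteq> {}")
    case True
    let ?step = "\<lambda>C. ((CM - {C}) \<union> {C' \<in> nbrs C. C' \<in> Mt \<and> C' \<notin> Vis \<union> {C}},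
      Vis \<union> {C})"
    have "CM \<subseteq> Mt" "finite CM"
      using Suc.prems assms(3) finite_subset by blast+
    have "pmf (bfs_loop eps du n nbrs q1 Mt (Suc k) (CM, Vis)) s
        \<le> exp eps * exp (eps * k) * pmf (bfs_loop eps du n nbrs q2 Mt (Suc k) (CM, Vis)) s"
      unfolding bfs_loop.simps if_P[OF True]
    proof (rule pmf_bind_le_scaled)
      show "pmf (exp_mech eps du q1 CM) C \<le> exp eps * pmf (exp_mech eps du q2 CM) C" for C
        using assms \<open>CM \<subseteq> Mt\<close> \<open>finite CM\<close> by (intro pmf_exp_mech_le) auto
    next
      fix C s
      assume "C \<in> set_pmf (exp_mech eps du q1 CM)"
      then have "C \<in> Mt"
        using set_pmf_exp_mech[OF \<open>finite CM\<close>] True \<open>CM \<subseteq> Mt\<close> by blast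
      with \<open>CM \<subseteq> Mt\<close> show "pmf (bfs_loop eps du n nbrs q1 Mt k (?step C)) s
          \<le> exp (eps * k) * pmf (bfs_loop eps du n nbrs q2 Mt k (?step C)) s"
        by (intro Suc.IH) auto
    qed auto
    then show ?thesis
      by (simp add: mult_exp_exp algebra_simps)
  next
    case False
    have "pmf (return_pmf (CM, Vis)) s \<le> 1 * pmf (return_pmf (CM, Vis)) s"
      by simp
    also have "\<dots> \<le> exp (eps * Suc k) * pmf (return_pmf (CM, Vis)) s"
      using assms(1) by (intro mult_right_mono) auto
    finally show ?thesis
      by (simp only: bfs_loop.simps if_not_P[OF False])
  qed
qed

lemma finite_COE: "finite (COE m dsz attr f D V)"
proof (rule finite_subset)
  show "COE m dsz attr f D V \<subseteq> ctxs m dsz"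
    by (auto simp: COE_def)
  show "finite (ctxs m dsz)"
    by (simp add: ctxs_def)
qed

lemma pmf_bfs_sample_le:
  assumes "eps \<ge> 0" "du > 0"
    and same_COE: "COE m dsz attr f D2 V = COE m dsz attr f D1 V"
    and "CV \<in> COE m dsz attr f D1 V"
    and "\<And>C. C \<in> COE m dsz attr f D1 V \<Longrightarrow> \<bar>u D1 C - u D2 C\<bar> \<le> du"
  shows "pmf (bfs_sample m dsz attr f u eps du n CV V D1) s
    \<le> exp (eps * (n + 2)) * pmf (bfs_sample m dsz attr f u eps du n CV V D2) s"
proof -
  let ?Mt = "COE m dsz attr f D1 V"
  let ?loop = "\<lambda>D. bfs_loop eps du n (\<lambda>C. {C' \<in> ctxs m dsz. connected C C'}) (u D) ?Mt
    (Suc n) ({CV}, {})"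
  have "pmf (bind_pmf (?loop D1) (\<lambda>(CM, Vis). exp_mech eps du (u D1) Vis)) s
      \<le> exp (eps * Suc n) * exp eps
        * pmf (bind_pmf (?loop D2) (\<lambda>(CM, Vis). exp_mech eps du (u D2) Vis)) s"
  proof (rule pmf_bind_le_scaled)
    show "pmf (?loop D1) st \<le> exp (eps * Suc n) * pmf (?loop D2) st" for st
      using assms finite_COE by (intro pmf_bfs_loop_le) auto
  next
    fix st s
    assume "st \<in> set_pmf (?loop D1)"
    moreover obtain CM Vis where st: "st = (CM, Vis)"
      by (cases st)
    moreover have "set_pmf (?loop D1) \<subseteq> Pow ?Mt \<times> Pow ?Mt"
      using assms(4) by (intro set_pmf_bfs_loop finite_COE) auto
    ultimately have "Vis \<subseteq> ?Mt"
      by blast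
    then show "pmf (case st of (CM, Vis) \<Rightarrow> exp_mech eps du (u D1) Vis) s
        \<le> exp eps * pmf (case st of (CM, Vis) \<Rightarrow> exp_mech eps du (u D2) Vis) s"
      unfolding st using assms(1,2,5) finite_subset[OF _ finite_COE]
      by (auto intro!: pmf_exp_mech_le)
  qed auto
  then show ?thesis
    unfolding bfs_sample_def same_COE by (simp add: mult_exp_exp algebra_simps)
qed

theorem theorem10:
  fixes m :: nat and dsz :: "nat \<Rightarrow> nat" and attr :: "'r \<Rightarrow> nat \<Rightarrow> nat"
    and f :: "'r multiset \<Rightarrow> 'r \<Rightarrow> bool" and u :: "'r multiset \<Rightarrow> ctx \<Rightarrow> real"
    and eps1 du :: real and n :: nat and CV :: ctx and V :: 'r
  assumes "eps1 > 0" and "n \<ge> 1" and "du > 0" and "du \<le> 1"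
    and "\<forall>D1 D2 C. neighbors D1 D2 \<and> C \<in> COE m dsz attr f D1 V \<and> C \<in> COE m dsz attr f D2 V
           \<longrightarrow> \<bar>u D1 C - u D2 C\<bar> \<le> du"
    and "CV \<in> ctxs m dsz"
  shows "OCDP_on ((2 * real n + 2) * eps1) (\<lambda>D. COE m dsz attr f D V)
           (bfs_sample m dsz attr f u eps1 du n CV V) neighbors
           {D. CV \<in> COE m dsz attr f D V}"
  unfolding OCDP_on_def
proof (intro ballI impI allI)
  fix D1 D2 S
  assume "D1 \<in> {D. CV \<in> COE m dsz attr f D V}"
    and nb: "neighbors D1 D2 \<and> COE m dsz attr f D1 V = COE m dsz attr f D2 V
      \<and> COE m dsz attr f D1 V \<noteq> {}"
  let ?M = "bfs_sample m dsz attr f u eps1 du n CV V"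
  have "pmf (?M D1) s \<le> exp (eps1 * (n + 2)) * pmf (?M D2) s" for s
    using assms(1,3,5) nb \<open>D1 \<in> _\<close> by (intro pmf_bfs_sample_le) auto
  then have "measure_pmf.prob (?M D1) S \<le> exp (eps1 * (n + 2)) * measure_pmf.prob (?M D2) S"
    by (intro measure_pmf_prob_le_scaled) auto
  also have "\<dots> \<le> exp ((2 * real n + 2) * eps1) * measure_pmf.prob (?M D2) S"
    using assms(1) by (intro mult_right_mono) (auto simp: algebra_simps)
  finally show "measure_pmf.prob (?M D1) S
      \<le> exp ((2 * real n + 2) * eps1) * measure_pmf.prob (?M D2) S" .
qed

end
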